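(* For all integers $m,n\ge0$ and $p\ge0$, $$\sum_{k=0}^{m}s(m,k)\,\mathcal{B}_{n+k,p}=\sum_{k=0}^{n}S_m(n+m,k+m)\binom{m+k+p}{p}^{-1}.$$
   Context: $s(m,k)$ are the signed Stirling numbers of the first kind, defined by $x(x-1)\cdots(x-m+1)=\sum_{k=0}^m s(m,k)x^k$. $S_r(n,k)$ denotes the $r$-Stirling numbers of the second kind (number of partitions of an $n$-set into $k$ nonempty blocks such that the first $r$ elements lie in distinct blocks); they satisfy $\sum_{n\ge k}S_r(n+r,k+r)\frac{z^n}{n!}=\frac{1}{k!}e^{rz}(e^z-1)^k$. For an integer $p\ge0$, the $p$-Bell numbers $\mathcal{B}_{n,p}$ are defined by $\sum_{n\ge0}\mathcal{B}_{n,p}\frac{z^n}{n!}=\sum_{n\ge0}\binom{n+p}{p}^{-1}\frac{(e^z-1)^n}{n!}$. *)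

theory Defs
  imports Complex_Main "HOL-Computational_Algebra.Computational_Algebra" "HOL-Library.Disjoint_Sets"
begin

definition falling_poly :: "nat \<Rightarrow> int poly" where
  "falling_poly m = (\<Prod>i<m. [:- of_nat i, 1:])"

definition sStirling1 :: "nat \<Rightarrow> nat \<Rightarrow> int" where
  "sStirling1 m k = coeff (falling_poly m) k"

definition rStirling2 :: "nat \<Rightarrow> nat \<Rightarrow> nat \<Rightarrow> nat" where
  "rStirling2 r n k = card {P. partition_on {0..<n} P \<and> card P = k \<and>
                               (\<forall>B\<in>P. card (B \<inter> {0..<r}) \<le> 1)}"

definition pBell_egf :: "nat \<Rightarrow> real fps" where
  "pBell_egf p = Abs_fps (\<lambda>j. 1 / (real ((j + p) choose p) * fact j)) oo (fps_exp 1 - 1)"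

definition pBell :: "nat \<Rightarrow> nat \<Rightarrow> real" where
  "pBell n p = fact n * (pBell_egf p $ n)"

end

theory Submission
  imports Defs "HOL-Combinatorics.Stirling"
begin

text \<open>
  Since \<open>(e\<^sup>z - 1)\<^sup>j/j!\<close> is the exponential generating function of the Stirling numbers
  \<open>S(N,j)\<close> of the second kind, \<open>\<B>\<^sub>N\<^sub>,\<^sub>p = \<Sum>\<^sub>j S(N,j) c\<^sub>j\<close> with \<open>c\<^sub>j = binom(j+p,p)\<^sup>-\<^sup>1\<close>.
  The theorem is thus a special case of an identity valid for arbitrary weights \<open>c\<^sub>j\<close>,
  which amounts to \<open>\<Sum>\<^sub>k s(m,k) S(n+k,j) = S\<^sub>m(n+m,j)\<close> for \<open>j \<ge> m\<close> and \<open>= 0\<close> for \<open>j < m\<close>.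
  This follows by induction on \<open>n\<close>: for \<open>n = 0\<close> it is the orthogonality of the Stirling
  numbers of the two kinds, and for \<open>n > 0\<close> both sides satisfy the recurrence
  \<open>T(n+1,j+1) = (j+1) T(n,j+1) + T(n,j)\<close>. For the \<open>r\<close>-Stirling numbers this recurrence
  comes from adding an element \<open>a\<close> outside the distinguished set: \<open>a\<close> either forms a
  singleton block or is inserted into one of the \<open>j+1\<close> blocks of a partition of the
  other elements.
\<close>

section \<open>Stirling numbers of the second kind and the powers of \<open>e\<^sup>z - 1\<close>\<close>

lemma fps_deriv_exp_minus_one_power:
  "fps_deriv ((fps_exp (1::'a::field_char_0) - 1) ^ Suc j) =
     of_nat (Suc j) * ((fps_exp 1 - 1) ^ Suc j + (fps_exp 1 - 1) ^ j)"
proof -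
  have "fps_deriv ((fps_exp (1::'a) - 1) ^ Suc j) = of_nat (Suc j) * fps_exp 1 * (fps_exp 1 - 1) ^ j"
    by (subst fps_deriv_power') simp
  also have "fps_exp (1::'a) = (fps_exp 1 - 1) + 1" by simp
  finally show ?thesis by (simp add: algebra_simps del: fps_exp_nth)
qed

lemma fps_exp_minus_one_power_nth:
  "(fps_exp (1::'a::field_char_0) - 1) ^ j $ N * fact N / fact j = of_nat (Stirling N j)"
proof (induction N arbitrary: j)
  case 0
  then show ?case by (cases j) auto
next
  case (Suc N)
  show ?case
  proof (cases j)
    case 0
    then show ?thesis by simp
  next
    case (Suc k)
    let ?E = "fps_exp (1::'a) - 1"
    have "fps_deriv (?E ^ Suc k) $ N = of_nat (Suc k) * (?E ^ Suc k $ N + ?E ^ k $ N)"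
      by (simp only: fps_deriv_exp_minus_one_power fps_of_nat[symmetric]
          fps_mult_left_const_nth fps_add_nth)
    hence deriv: "of_nat (Suc N) * ?E ^ Suc k $ Suc N = of_nat (Suc k) * (?E ^ Suc k $ N + ?E ^ k $ N)"
      by (simp del: fps_exp_nth of_nat_Suc power_Suc add: add.commute)
    have "?E ^ Suc k $ Suc N * fact (Suc N) / fact (Suc k)
       = (of_nat (Suc N) * ?E ^ Suc k $ Suc N) * fact N / fact (Suc k)"
      by (simp add: fact_Suc[of N] del: fps_exp_nth power_Suc of_nat_Suc fact_Suc)
    also have "\<dots> = of_nat (Suc k) * (?E ^ Suc k $ N) * fact N / fact (Suc k)
        + of_nat (Suc k) * (?E ^ k $ N) * fact N / fact (Suc k)"
      unfolding deriv by (simp add: algebra_simps add_divide_distrib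
          del: fps_exp_nth power_Suc of_nat_Suc)
    also have "\<dots> = of_nat (Suc k) * of_nat (Stirling N (Suc k)) + of_nat (Stirling N k)"
      using Suc.IH[of "Suc k"] Suc.IH[of k]
      by (simp add: fact_Suc[of k] field_simps del: fps_exp_nth power_Suc of_nat_Suc fact_Suc)
    finally show ?thesis using Suc by (simp add: algebra_simps)
  qed
qed

lemma pBell_eq_sum_Stirling: "pBell N p = (\<Sum>j=0..N. real (Stirling N j) / real ((j + p) choose p))"
proof -
  have "pBell N p = (\<Sum>j=0..N. fact N * (1 / (real ((j + p) choose p) * fact j) * ((fps_exp 1 - 1) ^ j $ N)))"
    by (simp add: pBell_def pBell_egf_def fps_compose_nth sum_distrib_left del: fps_exp_nth)
  also have "\<dots> = (\<Sum>j=0..N. ((fps_exp (1::real) - 1) ^ j $ N * fact N / fact j) / real ((j + p) choose p))"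
    by (rule sum.cong) (auto simp: field_simps)
  finally show ?thesis by (simp only: fps_exp_minus_one_power_nth)
qed

section \<open>Signed Stirling numbers of the first kind\<close>

lemma sStirling1_0_left: "sStirling1 0 k = (if k = 0 then 1 else 0)"
  by (simp add: sStirling1_def falling_poly_def)

lemma sStirling1_Suc_0: "sStirling1 (Suc m) 0 = - int m * sStirling1 m 0"
  by (simp add: sStirling1_def falling_poly_def)

lemma sStirling1_Suc_Suc: "sStirling1 (Suc m) (Suc k) = sStirling1 m k - int m * sStirling1 m (Suc k)"
  by (simp add: sStirling1_def falling_poly_def coeff_pCons)

lemma sStirling1_less: "m < k \<Longrightarrow> sStirling1 m k = 0"
proof (induction m arbitrary: k)
  case 0
  then show ?case by (simp add: sStirling1_0_left)
next
  case (Suc m)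
  then obtain k' where "k = Suc k'" by (cases k) auto
  with Suc show ?case by (simp add: sStirling1_Suc_Suc)
qed

lemma sum_sStirling1_Suc:
  fixes g :: "nat \<Rightarrow> int"
  shows "(\<Sum>k=0..Suc m. sStirling1 (Suc m) k * g k) =
    (\<Sum>k=0..m. sStirling1 m k * g (Suc k)) - int m * (\<Sum>k=0..m. sStirling1 m k * g k)"
proof -
  have "(\<Sum>k=0..Suc m. sStirling1 (Suc m) k * g k) =
     sStirling1 (Suc m) 0 * g 0 + (\<Sum>k=0..m. sStirling1 (Suc m) (Suc k) * g (Suc k))"
    by (subst sum.atLeast0_atMost_Suc_shift) simp
  also have "\<dots> = - int m * (sStirling1 m 0 * g 0 + (\<Sum>k=0..m. sStirling1 m (Suc k) * g (Suc k)))
      + (\<Sum>k=0..m. sStirling1 m k * g (Suc k))"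
    by (simp add: sStirling1_Suc_Suc sStirling1_Suc_0 algebra_simps sum_subtractf
        sum_distrib_left sum_negf)
  also have "sStirling1 m 0 * g 0 + (\<Sum>k=0..m. sStirling1 m (Suc k) * g (Suc k)) =
      (\<Sum>k=0..Suc m. sStirling1 m k * g k)"
    by (subst sum.atLeast0_atMost_Suc_shift) simp
  also have "\<dots> = (\<Sum>k=0..m. sStirling1 m k * g k)"
    by (simp add: sStirling1_less)
  finally show ?thesis by simp
qed

lemma sum_sStirling1_Stirling: "(\<Sum>k=0..m. sStirling1 m k * int (Stirling k j)) = (if j = m then 1 else 0)"
proof (induction m arbitrary: j)
  case 0
  then show ?case by (cases j) (auto simp: sStirling1_0_left)
next
  case (Suc m)
  show ?case
  proof (cases j)
    case 0
    then show ?thesis using Suc.IH[of 0] unfolding sum_sStirling1_Suc by simp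
  next
    case (Suc i)
    have "(\<Sum>k=0..m. sStirling1 m k * int (Stirling (Suc k) (Suc i))) =
       int (Suc i) * (\<Sum>k=0..m. sStirling1 m k * int (Stirling k (Suc i)))
       + (\<Sum>k=0..m. sStirling1 m k * int (Stirling k i))"
      by (simp add: algebra_simps sum.distrib sum_distrib_left)
    then show ?thesis using Suc.IH[of "Suc i"] Suc.IH[of i] Suc unfolding sum_sStirling1_Suc by simp
  qed
qed

section \<open>Partitions separating a set\<close>

definition separating_partitions :: "'a set \<Rightarrow> 'a set \<Rightarrow> nat \<Rightarrow> 'a set set set" where
  "separating_partitions C A k =
     {P. partition_on A P \<and> card P = k \<and> (\<forall>B\<in>P. card (B \<inter> C) \<le> 1)}"

lemma rStirling2_eq_card_separating_partitions:
  "rStirling2 r n k = card (separating_partitions {0..<r} {0..<n} k)"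
  by (simp add: rStirling2_def separating_partitions_def Int_commute)

lemma finite_separating_partitions: "finite A \<Longrightarrow> finite (separating_partitions C A k)"
  by (rule finite_subset[OF _ finitely_many_partition_on]) (auto simp: separating_partitions_def)

lemma separating_partitions_0: "A \<noteq> {} \<Longrightarrow> finite A \<Longrightarrow> separating_partitions C A 0 = {}"
  using finite_elements
  by (fastforce simp: separating_partitions_def partition_on_def card_eq_0_iff)

lemma card_separating_partitions_self:
  assumes "finite A"
  shows "card (separating_partitions A A k) = (if k = card A then 1 else 0)"
proof -
  let ?S = "(\<lambda>x. {x}) ` A"
  have unique: "P = ?S" if P: "partition_on A P" and sep: "\<forall>B\<in>P. card (B \<inter> A) \<le> 1" for P
  proof -
    have singleton: "card B = 1" if "B \<in> P" for B
    proof -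
      have "B \<subseteq> A" "B \<noteq> {}" using P that by (auto simp: partition_on_def)
      moreover have "finite B" using \<open>B \<subseteq> A\<close> assms finite_subset by blast
      ultimately show ?thesis using sep that by (metis Int_absorb2 card_0_eq le_antisym less_one not_le)
    qed
    show ?thesis
    proof (intro equalityI subsetI)
      fix B assume "B \<in> P"
      then obtain x where "B = {x}" using singleton by (metis card_1_singletonE)
      then show "B \<in> ?S" using partition_onD1[OF P] \<open>B \<in> P\<close> by blast
    next
      fix B assume "B \<in> ?S"
      then obtain x where "x \<in> A" "B = {x}" by blast
      then obtain X where "X \<in> P" "x \<in> X" using partition_onD1[OF P] by blast
      then show "B \<in> P" using \<open>B = {x}\<close> singleton by (metis card_1_singletonE singletonD)
    qed
  qed
  have S: "partition_on A ?S" "card ?S = card A" "\<forall>B\<in>?S. card (B \<inter> A) \<le> 1"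
    by (auto simp: partition_on_singletons card_image)
  have "P \<in> separating_partitions A A k \<longleftrightarrow> P = ?S \<and> k = card A" for P
    using unique S unfolding separating_partitions_def by blast
  then have "separating_partitions A A k = (if k = card A then {?S} else {})"
    by auto
  then show ?thesis by simp
qed

lemma separating_partitions_insert_singleton:
  assumes "finite A" "a \<notin> A" "a \<notin> C"
  shows "{P \<in> separating_partitions C (insert a A) (Suc k). {a} \<in> P} =
           insert {a} ` separating_partitions C A k"
proof safe
  fix Q assume Q: "Q \<in> separating_partitions C A k"
  hence "partition_on A Q" "card Q = k" by (auto simp: separating_partitions_def)
  moreover have "finite Q" using finite_elements[OF assms(1)] calculation by blast
  moreover have "{a} \<notin> Q" using calculation assms partition_onD1 by fastforce
  moreover have "partition_on (insert a A) (insert {a} Q)"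
    using calculation assms by (subst partition_on_insert) (auto simp: disjnt_def dest: partition_onD1)
  ultimately show "insert {a} Q \<in> separating_partitions C (insert a A) (Suc k)"
    using Q assms by (auto simp: separating_partitions_def)
next
  fix P assume P: "P \<in> separating_partitions C (insert a A) (Suc k)" and "{a} \<in> P"
  hence part: "partition_on (insert a A) P" and card: "card P = Suc k"
    by (auto simp: separating_partitions_def)
  have P_eq: "P = insert {a} (P - {{a}})" using \<open>{a} \<in> P\<close> by blast
  have "disjnt {a} (\<Union>(P - {{a}}))"
    using disjointD[OF partition_onD2[OF part] \<open>{a} \<in> P\<close>] unfolding disjnt_def by blast
  then have "partition_on A (P - {{a}})"
    using part P_eq partition_on_insert[of "{a}" "P - {{a}}" "insert a A"] assms(2) by simp
  moreover have "card (P - {{a}}) = k"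
    using card \<open>{a} \<in> P\<close> by (simp add: card_ge_0_finite)
  ultimately have "P - {{a}} \<in> separating_partitions C A k"
    using P by (auto simp: separating_partitions_def)
  then show "P \<in> insert {a} ` separating_partitions C A k" using P_eq by blast
qed

definition insert_into_block :: "'a \<Rightarrow> 'a set set \<Rightarrow> 'a set \<Rightarrow> 'a set set" where
  "insert_into_block a Q B = insert (insert a B) (Q - {B})"

lemma insert_into_block_in_separating_partitions:
  assumes "finite A" "a \<notin> A" "a \<notin> C"
    and Q: "Q \<in> separating_partitions C A k" and "B \<in> Q"
  shows "insert_into_block a Q B \<in> separating_partitions C (insert a A) k"
proof -
  have part: "partition_on A Q" and card: "card Q = k" and sep: "\<forall>B\<in>Q. card (B \<inter> C) \<le> 1"
    using Q by (auto simp: separating_partitions_def)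
  have "B \<subseteq> A" "B \<noteq> {}" using part \<open>B \<in> Q\<close> by (auto simp: partition_on_def)
  have disj: "disjnt B (\<Union>(Q - {B}))"
    using disjointD[OF partition_onD2[OF part] \<open>B \<in> Q\<close>] unfolding disjnt_def by blast
  have "partition_on (A - B) (Q - {B})"
    using partition_on_insert[OF disj, of A] part insert_Diff[OF \<open>B \<in> Q\<close>] by simp
  moreover have "disjnt (insert a B) (\<Union>(Q - {B}))"
    using disj calculation assms by (auto simp: disjnt_def partition_on_def)
  moreover have "insert a A - insert a B = A - B" using assms by auto
  ultimately have "partition_on (insert a A) (insert_into_block a Q B)"
    using partition_on_insert[of "insert a B" _ "insert a A"] \<open>B \<subseteq> A\<close>
    by (auto simp: insert_into_block_def)
  moreover have "insert a B \<notin> Q - {B}" using part assms by (auto simp: partition_on_def)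
  then have "card (insert_into_block a Q B) = card Q"
    using finite_elements[OF assms(1) part] \<open>B \<in> Q\<close>
    by (metis card_Suc_Diff1 card_insert_disjoint finite_Diff insert_into_block_def)
  moreover have "card (insert a B \<inter> C) \<le> 1" using sep \<open>B \<in> Q\<close> assms by auto
  ultimately show ?thesis
    using sep card by (auto simp: separating_partitions_def insert_into_block_def)
qed

lemma separating_partition_eq_insert_into_block:
  assumes "finite A" "a \<notin> A"
    and P: "P \<in> separating_partitions C (insert a A) k" and "{a} \<notin> P"
  obtains Q B where "Q \<in> separating_partitions C A k" "B \<in> Q" "P = insert_into_block a Q B"
proof -
  have part: "partition_on (insert a A) P" and sep: "\<forall>B\<in>P. card (B \<inter> C) \<le> 1"
    using P by (auto simp: separating_partitions_def)
  obtain X where "X \<in> P" "a \<in> X" using part by (auto simp: partition_on_def)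
  define B where "B = X - {a}"
  have X_eq: "X = insert a B" using \<open>a \<in> X\<close> B_def by auto
  have "B \<noteq> {}" using \<open>X \<in> P\<close> \<open>{a} \<notin> P\<close> X_eq by auto
  have "B \<subseteq> A" using part \<open>X \<in> P\<close> B_def by (auto simp: partition_on_def)
  have disj: "disjnt X (\<Union>(P - {X}))"
    using disjointD[OF partition_onD2[OF part] \<open>X \<in> P\<close>] unfolding disjnt_def by blast
  have "partition_on (insert a A - X) (P - {X})"
    using partition_on_insert[OF disj, of "insert a A"] part insert_Diff[OF \<open>X \<in> P\<close>] by simp
  moreover have "insert a A - X = A - B" using assms X_eq by auto
  moreover have "disjnt B (\<Union>(P - {X}))" using disj B_def by (auto simp: disjnt_def)
  moreover have "B \<notin> P - {X}" using disj \<open>B \<noteq> {}\<close> B_def by (auto simp: disjnt_def)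
  ultimately have "partition_on A (insert B (P - {X}))" and B_notin: "B \<notin> P - {X}"
    using partition_on_insert[of B _ A] \<open>B \<subseteq> A\<close> \<open>B \<noteq> {}\<close> by auto
  moreover have "card (insert B (P - {X})) = k"
  proof -
    have "finite P" using finite_elements[OF _ part] assms(1) by simp
    then have "card (insert B (P - {X})) = Suc (card (P - {X}))" using B_notin by simp
    also have "\<dots> = card P" using card_Suc_Diff1[OF \<open>finite P\<close> \<open>X \<in> P\<close>] .
    finally show ?thesis using P by (simp add: separating_partitions_def)
  qed
  moreover have "card (B \<inter> C) \<le> card (X \<inter> C)"
  proof (rule card_mono)
    have "X \<subseteq> insert a A" using part \<open>X \<in> P\<close> by (auto simp: partition_on_def)
    then show "finite (X \<inter> C)" using assms(1) finite_subset by blast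
  qed (auto simp: B_def)
  then have "card (B \<inter> C) \<le> 1" using sep \<open>X \<in> P\<close> by fastforce
  ultimately have "insert B (P - {X}) \<in> separating_partitions C A k"
    using sep by (auto simp: separating_partitions_def)
  moreover have "P = insert_into_block a (insert B (P - {X})) B"
    using B_notin X_eq \<open>X \<in> P\<close> by (auto simp: insert_into_block_def)
  ultimately show ?thesis using that by blast
qed

lemma separating_partitions_insert_nonsingleton:
  assumes "finite A" "a \<notin> A" "a \<notin> C"
  shows "{P \<in> separating_partitions C (insert a A) k. {a} \<notin> P} =
           case_prod (insert_into_block a) ` (SIGMA Q:separating_partitions C A k. Q)"
proof safe
  fix Q B assume Q: "Q \<in> separating_partitions C A k" and "B \<in> Q"
  then show "insert_into_block a Q B \<in> separating_partitions C (insert a A) k"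
    by (rule insert_into_block_in_separating_partitions[OF assms])
  assume "{a} \<in> insert_into_block a Q B"
  moreover have "partition_on A Q" using Q by (simp add: separating_partitions_def)
  then have "B \<noteq> {}" "a \<notin> B" "{a} \<notin> Q"
    using \<open>B \<in> Q\<close> assms by (auto simp: partition_on_def)
  ultimately show False by (auto simp: insert_into_block_def)
next
  fix P assume "P \<in> separating_partitions C (insert a A) k" "{a} \<notin> P"
  with assms(1,2) obtain Q B
    where "Q \<in> separating_partitions C A k" "B \<in> Q" "P = insert_into_block a Q B"
    by (rule separating_partition_eq_insert_into_block)
  then show "P \<in> case_prod (insert_into_block a) ` (SIGMA Q:separating_partitions C A k. Q)"
    by force
qed

lemma inj_on_insert_into_block:
  assumes "a \<notin> A"
  shows "inj_on (case_prod (insert_into_block a)) (SIGMA Q:separating_partitions C A k. Q)"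
proof (rule inj_onI, clarsimp)
  fix Q1 B1 Q2 B2
  assume Q1: "Q1 \<in> separating_partitions C A k" "B1 \<in> Q1"
    and Q2: "Q2 \<in> separating_partitions C A k" "B2 \<in> Q2"
    and eq: "insert_into_block a Q1 B1 = insert_into_block a Q2 B2"
  have "\<Union>Q1 = A" "\<Union>Q2 = A" using Q1 Q2 by (auto simp: separating_partitions_def partition_on_def)
  then have notin: "insert a B \<notin> Q1" "insert a B \<notin> Q2" for B
    using assms by auto
  have "a \<notin> B1" "a \<notin> B2" using \<open>\<Union>Q1 = A\<close> \<open>\<Union>Q2 = A\<close> assms Q1 Q2 by auto
  moreover have "insert a B1 \<in> insert_into_block a Q2 B2"
    unfolding eq[symmetric] by (simp add: insert_into_block_def)
  then have "insert a B1 = insert a B2" using notin by (simp add: insert_into_block_def)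
  ultimately have "B1 = B2" by (metis insert_ident)
  have "Q1 - {B1} = insert_into_block a Q1 B1 - {insert a B1}"
    using notin by (auto simp: insert_into_block_def)
  also have "\<dots> = insert_into_block a Q2 B2 - {insert a B2}" using eq \<open>B1 = B2\<close> by simp
  also have "\<dots> = Q2 - {B2}" using notin by (auto simp: insert_into_block_def)
  finally show "Q1 = Q2 \<and> B1 = B2" using Q1 Q2 \<open>B1 = B2\<close> by blast
qed

lemma card_separating_partitions_insert:
  assumes "finite A" "a \<notin> A" "a \<notin> C"
  shows "card (separating_partitions C (insert a A) (Suc k)) =
           Suc k * card (separating_partitions C A (Suc k)) + card (separating_partitions C A k)"
proof -
  let ?P = "separating_partitions C (insert a A) (Suc k)"
  have "card ?P = card {P \<in> ?P. {a} \<in> P} + card {P \<in> ?P. {a} \<notin> P}"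
    using finite_separating_partitions[of "insert a A"] assms(1)
    by (subst card_Un_disjoint[symmetric]) (auto intro: arg_cong[of _ _ card])
  also have "card {P \<in> ?P. {a} \<in> P} = card (separating_partitions C A k)"
  proof -
    have "inj_on (insert {a}) (separating_partitions C A k)"
    proof (rule inj_onI)
      fix Q1 Q2 assume "Q1 \<in> separating_partitions C A k" "Q2 \<in> separating_partitions C A k"
      then have "{a} \<notin> Q1" "{a} \<notin> Q2"
        using assms(2) by (auto simp: separating_partitions_def partition_on_def)
      then show "insert {a} Q1 = insert {a} Q2 \<Longrightarrow> Q1 = Q2" by (metis insert_ident)
    qed
    then show ?thesis
      by (simp add: separating_partitions_insert_singleton[OF assms] card_image)
  qed
  also have "card {P \<in> ?P. {a} \<notin> P} = card (SIGMA Q:separating_partitions C A (Suc k). Q)"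
    unfolding separating_partitions_insert_nonsingleton[OF assms]
    by (rule card_image, rule inj_on_insert_into_block, rule assms(2))
  also have "\<dots> = (\<Sum>Q\<in>separating_partitions C A (Suc k). card Q)"
    using finite_separating_partitions[OF assms(1)] finite_elements[OF assms(1)]
    by (intro card_SigmaI) (auto simp: separating_partitions_def)
  also have "\<dots> = Suc k * card (separating_partitions C A (Suc k))"
    by (simp add: separating_partitions_def)
  finally show ?thesis by simp
qed

section \<open>\<open>r\<close>-Stirling numbers\<close>

lemma rStirling2_same: "rStirling2 r r k = (if k = r then 1 else 0)"
  unfolding rStirling2_eq_card_separating_partitions by (subst card_separating_partitions_self) auto

lemma rStirling2_Suc_0: "rStirling2 r (Suc n) 0 = 0"
  unfolding rStirling2_eq_card_separating_partitions by (subst separating_partitions_0) auto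

lemma rStirling2_Suc_Suc:
  "r \<le> n \<Longrightarrow> rStirling2 r (Suc n) (Suc k) = Suc k * rStirling2 r n (Suc k) + rStirling2 r n k"
  unfolding rStirling2_eq_card_separating_partitions atLeast0_lessThan_Suc
  by (subst card_separating_partitions_insert) auto

lemma rStirling2_less: "j < r \<Longrightarrow> rStirling2 r (n + r) j = 0"
proof (induction n arbitrary: j)
  case 0
  then show ?case by (simp add: rStirling2_same)
next
  case (Suc n)
  then show ?case by (cases j) (simp_all add: rStirling2_Suc_0 rStirling2_Suc_Suc)
qed

lemma sum_sStirling1_Stirling_shift:
  "(\<Sum>k=0..m. sStirling1 m k * int (Stirling (n + k) j)) =
     (if m \<le> j then int (rStirling2 m (n + m) j) else 0)"
proof (induction n arbitrary: j)
  case 0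
  then show ?case by (simp add: sum_sStirling1_Stirling rStirling2_same)
next
  case (Suc n)
  show ?case
  proof (cases j)
    case 0
    then show ?thesis by (simp add: rStirling2_Suc_0)
  next
    case (Suc i)
    have "(\<Sum>k=0..m. sStirling1 m k * int (Stirling (Suc n + k) (Suc i))) =
       int (Suc i) * (\<Sum>k=0..m. sStirling1 m k * int (Stirling (n + k) (Suc i)))
       + (\<Sum>k=0..m. sStirling1 m k * int (Stirling (n + k) i))"
      by (simp add: algebra_simps sum.distrib sum_distrib_left)
    also have "\<dots> = (if m \<le> j then int (rStirling2 m (Suc n + m) j) else 0)"
      using Suc.IH[of "Suc i"] Suc.IH[of i] Suc rStirling2_less[of i m n]
      by (auto simp: rStirling2_Suc_Suc algebra_simps)
    finally show ?thesis using Suc by simp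
  qed
qed

lemma sum_sStirling1_sum_Stirling:
  fixes c :: "nat \<Rightarrow> 'a::comm_ring_1"
  shows "(\<Sum>k=0..m. of_int (sStirling1 m k) * (\<Sum>j=0..n+k. of_nat (Stirling (n + k) j) * c j)) =
           (\<Sum>k=0..n. of_nat (rStirling2 m (n + m) (k + m)) * c (k + m))"
proof -
  have "(\<Sum>k=0..m. of_int (sStirling1 m k) * (\<Sum>j=0..n+k. of_nat (Stirling (n + k) j) * c j)) =
        (\<Sum>k=0..m. of_int (sStirling1 m k) * (\<Sum>j=0..n+m. of_nat (Stirling (n + k) j) * c j))"
    by (intro sum.cong refl arg_cong2[where f = "(*)"] sum.mono_neutral_left) (auto simp: Stirling_less)
  also have "\<dots> = (\<Sum>j=0..n+m. of_int (\<Sum>k=0..m. sStirling1 m k * int (Stirling (n + k) j)) * c j)"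
    by (simp add: sum_distrib_left sum_distrib_right mult.assoc sum.swap[of _ "{0..m}"])
  also have "\<dots> = (\<Sum>j\<in>{0..n+m} \<inter> {j. m \<le> j}. of_nat (rStirling2 m (n + m) j) * c j)"
    unfolding sum.inter_restrict[OF finite_atLeastAtMost]
    by (rule sum.cong) (simp_all add: sum_sStirling1_Stirling_shift)
  also have "{0..n+m} \<inter> {j. m \<le> j} = {0 + m..n + m}"
    by auto
  also have "(\<Sum>j=0 + m..n + m. of_nat (rStirling2 m (n + m) j) * c j) =
             (\<Sum>k=0..n. of_nat (rStirling2 m (n + m) (k + m)) * c (k + m))"
    by (rule sum.shift_bounds_cl_nat_ivl)
  finally show ?thesis .
qed

theorem mainTheorem2:
  fixes m n p :: nat
  shows "(\<Sum>k = 0..m. real_of_int (sStirling1 m k) * pBell (n + k) p)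
       = (\<Sum>k = 0..n. real (rStirling2 m (n + m) (k + m)) / real ((m + k + p) choose p))"
  using sum_sStirling1_sum_Stirling[of m n "\<lambda>j. 1 / real ((j + p) choose p)"]
  by (simp add: pBell_eq_sum_Stirling add_ac)

end
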